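(* Let $Z_n=X^*_{2^n}$. There exist a sequence of integers $n_k\to\infty$ and a constant $C<\infty$ such that for all $k$, $$E Z_{n_k+1}\le E Z_{n_k}+C .$$
   Context: For an integer $N\ge 1$ let $V_N=(\{0,1,\dots,N\})^2\subset\mathbb Z^2$, $V_N^o=(\{1,\dots,N-1\})^2$, and $\partial V_N=V_N\setminus V_N^o$. Let $\{w_m\}_{m\ge0}$ be simple random walk on $\mathbb Z^2$ started in $V_N$, killed at $\tau=\min\{m: w_m\in\partial V_N\}$, and define the Green function $G_N(x,y)=E^x\big(\sum_{m=0}^{\tau}\mathbf 1_{\{w_m=y\}}\big)$ for $x,y\in V_N$ (with $E^x$ expectation for the walk started at $x$; in particular $G_N(x,y)=0$ if $x$ or $y\in\partial V_N$). The discrete Gaussian free field (GFF) on $V_N$ with Dirichlet boundary conditions is the centered Gaussian field $\{X^N_z\}_{z\in V_N}$ with covariance $E[X^N_xX^N_y]=G_N(x,y)$. Write $X_N^*=\max_{z\in V_N}X^N_z$. *)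

theory Defs
  imports "HOL-Probability.Probability"
begin

definition VN :: "nat \<Rightarrow> (int \<times> int) set" where
  "VN N = {0..int N} \<times> {0..int N}"

definition VNint :: "nat \<Rightarrow> (int \<times> int) set" where
  "VNint N = {1..int N - 1} \<times> {1..int N - 1}"

definition bdVN :: "nat \<Rightarrow> (int \<times> int) set" where
  "bdVN N = VN N - VNint N"

definition adj :: "int \<times> int \<Rightarrow> int \<times> int \<Rightarrow> bool" where
  "adj z y \<longleftrightarrow> \<bar>fst z - fst y\<bar> + \<bar>snd z - snd y\<bar> = 1"

text \<open>killed_p N m x y = P^x(w_m = y and w_0, ..., w_(m-1) stay in the interior),
  for simple random walk (step probability 1/4 to each neighbour), x and y interior.\<close>
fun killed_p :: "nat \<Rightarrow> nat \<Rightarrow> int \<times> int \<Rightarrow> int \<times> int \<Rightarrow> real" where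
  "killed_p N 0 x y = (if x = y then 1 else 0)"
| "killed_p N (Suc m) x y =
     (\<Sum>z\<in>VNint N. killed_p N m x z * (if adj z y then 1/4 else 0))"

text \<open>Green function G_N(x,y) = E^x (sum_{m=0}^{tau} 1{w_m = y}); equal to 0 if x or y is
  on the boundary; for interior x, y it is the sum over m of P^x(w_m = y, m < tau).\<close>
definition green :: "nat \<Rightarrow> int \<times> int \<Rightarrow> int \<times> int \<Rightarrow> real" where
  "green N x y = (if x \<in> VNint N \<and> y \<in> VNint N then (\<Sum>m. killed_p N m x y) else 0)"

definition centered_normal_rv :: "'a measure \<Rightarrow> ('a \<Rightarrow> real) \<Rightarrow> real \<Rightarrow> bool" where
  "centered_normal_rv M Y v \<longleftrightarrow>
     (v > 0 \<and> distributed M lborel Y (normal_density 0 (sqrt v))) \<or>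
     (v = 0 \<and> (AE \<omega> in M. Y \<omega> = 0))"

definition is_GFF :: "'a measure \<Rightarrow> nat \<Rightarrow> (int \<times> int \<Rightarrow> 'a \<Rightarrow> real) \<Rightarrow> bool" where
  "is_GFF M N X \<longleftrightarrow>
     prob_space M \<and>
     (\<forall>z\<in>VN N. X z \<in> borel_measurable M) \<and>
     (\<forall>a :: int \<times> int \<Rightarrow> real.
        centered_normal_rv M (\<lambda>\<omega>. \<Sum>z\<in>VN N. a z * X z \<omega>)
          (\<Sum>x\<in>VN N. \<Sum>y\<in>VN N. a x * a y * green N x y)) \<and>
     (\<forall>x\<in>VN N. \<forall>y\<in>VN N. integral\<^sup>L M (\<lambda>\<omega>. X x \<omega> * X y \<omega>) = green N x y)"

definition field_max :: "nat \<Rightarrow> (int \<times> int \<Rightarrow> 'a \<Rightarrow> real) \<Rightarrow> 'a \<Rightarrow> real" where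
  "field_max N X \<omega> = Max ((\<lambda>z. X z \<omega>) ` VN N)"

end

theory Submission
  imports Defs
begin

(*
  Write E_n = E X*_{2^n}.  It suffices to show that E_n grows at
  most linearly, E_n <= 3n + 4: then the increments E_(n+1) - E_n cannot all exceed 4
  from some point on, so the set {n. E_(n+1) <= E_n + 4} is infinite and its increasing
  enumeration is the required sequence n_k (with C = 4).

  The linear bound combines two estimates.
  (1) Gaussian part: if E exp(Y_z) <= exp s for finitely many variables Y_z, then
      E max_z Y_z <= s + ln #I + 1 (exponential-moment union bound).  For the GFF the
      marginal X_z is centered normal with variance G_N(z,z), so E exp(X_z) = exp(G_N(z,z)/2).
  (2) Green function part: G_N(x,x) <= h(x) for every nonnegative h on the interior that
      is superharmonic for the killed walk with unit source at x.  The potential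
      h(y) = (ln(2N^2+1) - ln(|y-x|^2+1)) / ln 2 has this property, which gives
      G_N(x,x) = O(log N).
*)

section \<open>Exponential moments and the expected maximum\<close>

lemma normal_density_exp_tilt:
  fixes v x :: real
  assumes v: "v > 0"
  shows "normal_density 0 (sqrt v) x * exp x = exp (v/2) * normal_density v (sqrt v) x"
proof -
  have sq: "(sqrt v)\<^sup>2 = v" using v by simp
  have complete_square: "x + - (x\<^sup>2 / (v * 2)) = v/2 + - ((x - v)\<^sup>2 / (v * 2))"
    using v by (simp add: field_simps power2_eq_square)
  have "exp x * exp (- (x\<^sup>2 / (v * 2))) = exp (v / 2) * exp (- ((x - v)\<^sup>2 / (v * 2)))"
    by (simp only: mult_exp_exp complete_square)
  then show ?thesis
    unfolding normal_density_def sq using v by (simp add: ac_simps)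
qed

lemma centered_normal_exp_moment:
  assumes "prob_space M" and normal: "centered_normal_rv M Y v"
    and Y_meas: "Y \<in> borel_measurable M"
  shows "integrable M (\<lambda>\<omega>. exp (Y \<omega>))" and "(\<integral>\<omega>. exp (Y \<omega>) \<partial>M) = exp (v/2)"
proof -
  interpret prob_space M by fact
  have "integrable M (\<lambda>\<omega>. exp (Y \<omega>)) \<and> (\<integral>\<omega>. exp (Y \<omega>) \<partial>M) = exp (v/2)"
  proof (cases "v > 0")
    case True
    then have D: "distributed M lborel Y (normal_density 0 (sqrt v))"
      using normal unfolding centered_normal_rv_def by auto
    have sd: "sqrt v > 0" using True by simp
    have dens_nonneg: "\<And>x. 0 \<le> normal_density 0 (sqrt v) x"
      by (simp add: normal_density_nonneg)
    have tilt: "(\<lambda>x. normal_density 0 (sqrt v) x * exp x)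
                = (\<lambda>x. exp (v/2) * normal_density v (sqrt v) x)"
      using normal_density_exp_tilt[OF True] by auto
    have "integrable lborel (\<lambda>x. normal_density 0 (sqrt v) x * exp x)"
      unfolding tilt using integrable_normal_density[OF sd] by simp
    then have "integrable M (\<lambda>\<omega>. exp (Y \<omega>))"
      using distributed_integrable[OF D, of exp] dens_nonneg by simp
    moreover have "(\<integral>\<omega>. exp (Y \<omega>) \<partial>M) = exp (v/2)"
      using distributed_integral[OF D, of exp, symmetric] dens_nonneg tilt
        integral_normal_density[OF sd] by simp
    ultimately show ?thesis by simp
  next
    case False
    then have "v = 0" and "AE \<omega> in M. Y \<omega> = 0"
      using normal unfolding centered_normal_rv_def by auto
    then have one: "AE \<omega> in M. exp (Y \<omega>) = 1" by (auto elim: AE_mp)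
    have "integrable M (\<lambda>\<omega>. exp (Y \<omega>))"
      using integrable_cong_AE[of "\<lambda>\<omega>. exp (Y \<omega>)" M "\<lambda>_. 1"] one Y_meas by simp
    moreover have "(\<integral>\<omega>. exp (Y \<omega>) \<partial>M) = 1"
      using integral_cong_AE[of "\<lambda>\<omega>. exp (Y \<omega>)" M "\<lambda>_. 1"] one Y_meas
      by (simp add: prob_space)
    ultimately show ?thesis using \<open>v = 0\<close> by simp
  qed
  then show "integrable M (\<lambda>\<omega>. exp (Y \<omega>))" and "(\<integral>\<omega>. exp (Y \<omega>) \<partial>M) = exp (v/2)"
    by auto
qed

text \<open>Union bound through exponential moments: the expected maximum of finitely many
  variables with E e^(Y_z) <= e^s is at most s + ln #I + 1.  It rests on the pointwise
  bound max_z Y_z <= a + sum_z e^(Y_z - a - 1), valid for every real a.\<close>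
lemma expected_max_le_exp_moment:
  assumes "prob_space M" and I: "finite I" "I \<noteq> {}"
    and exp_int: "\<And>z. z \<in> I \<Longrightarrow> integrable M (\<lambda>\<omega>. exp (Y z \<omega>))"
    and exp_le: "\<And>z. z \<in> I \<Longrightarrow> (\<integral>\<omega>. exp (Y z \<omega>) \<partial>M) \<le> exp s"
    and s: "s \<ge> 0"
  shows "(\<integral>\<omega>. Max ((\<lambda>z. Y z \<omega>) ` I) \<partial>M) \<le> s + ln (card I) + 1"
proof -
  interpret prob_space M by fact
  define a where "a = s + ln (card I)"
  have card_pos: "real (card I) \<ge> 1" using I by (simp add: Suc_leI card_gt_0_iff)
  define R where "R \<omega> = a + (\<Sum>z\<in>I. exp (-a-1) * exp (Y z \<omega>))" for \<omega>
  have R_int: "integrable M R" unfolding R_def using exp_int by auto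
  have "integral\<^sup>L M R = a + (\<Sum>z\<in>I. exp (-a-1) * (\<integral>\<omega>. exp (Y z \<omega>) \<partial>M))"
    unfolding R_def using exp_int by (simp add: Bochner_Integration.integral_sum prob_space)
  also have "\<dots> \<le> a + (\<Sum>z\<in>I. exp (-a-1) * exp s)"
    using exp_le by (intro add_left_mono sum_mono mult_left_mono) auto
  also have "\<dots> = a + exp (ln (card I) + (-a-1) + s)"
    using card_pos by (simp add: exp_add)
  also have "\<dots> = a + exp (-1)" unfolding a_def by simp
  also have "\<dots> \<le> a + 1" by simp
  finally have R_le: "integral\<^sup>L M R \<le> a + 1" .
  have max_le_R: "Max ((\<lambda>z. Y z \<omega>) ` I) \<le> R \<omega>" for \<omega>
  proof -
    have "Max ((\<lambda>z. Y z \<omega>) ` I) \<in> (\<lambda>z. Y z \<omega>) ` I"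
      using I by (intro Max_in) auto
    then obtain z0 where z0: "z0 \<in> I" "Max ((\<lambda>z. Y z \<omega>) ` I) = Y z0 \<omega>"
      by auto
    have "Y z0 \<omega> - a \<le> exp (Y z0 \<omega> - a - 1)"
      using exp_ge_add_one_self[of "Y z0 \<omega> - a - 1"] by simp
    also have "\<dots> = exp (-a-1) * exp (Y z0 \<omega>)" by (simp add: mult_exp_exp)
    also have "\<dots> \<le> (\<Sum>z\<in>I. exp (-a-1) * exp (Y z \<omega>))"
      using z0 I by (intro member_le_sum) auto
    finally show ?thesis unfolding R_def using z0 by simp
  qed
  have "(\<integral>\<omega>. Max ((\<lambda>z. Y z \<omega>) ` I) \<partial>M) \<le> a + 1"
  proof (cases "integrable M (\<lambda>\<omega>. Max ((\<lambda>z. Y z \<omega>) ` I))")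
    case True
    then show ?thesis using integral_mono[OF True R_int max_le_R] R_le by simp
  next
    case False
    moreover have "0 \<le> a" unfolding a_def using s card_pos by simp
    ultimately show ?thesis by (simp add: not_integrable_integral_eq)
  qed
  then show ?thesis unfolding a_def .
qed

section \<open>The Gaussian free field\<close>

lemma finite_VN [simp]: "finite (VN N)"
  by (simp add: VN_def)

lemma finite_VNint [simp]: "finite (VNint N)"
  by (simp add: VNint_def)

lemma card_VN: "card (VN N) = (N + 1)\<^sup>2"
proof -
  have "nat (int N + 1) = N + 1" by simp
  then show ?thesis
    by (simp add: VN_def card_cartesian_product power2_eq_square del: nat_int_add)
qed

text \<open>Each single value X_z of the GFF is centered normal with variance G_N(z,z)
  (take the linear combination with coefficient vector the indicator of z).\<close>
lemma GFF_marginal: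
  assumes G: "is_GFF M N X" and z: "z \<in> VN N"
  shows "centered_normal_rv M (X z) (green N z z)"
proof -
  let ?a = "\<lambda>w::int \<times> int. if w = z then 1 else (0::real)"
  have normal: "centered_normal_rv M (\<lambda>\<omega>. \<Sum>w\<in>VN N. ?a w * X w \<omega>)
                  (\<Sum>x\<in>VN N. \<Sum>y\<in>VN N. ?a x * ?a y * green N x y)"
    using G unfolding is_GFF_def by (elim conjE allE) assumption
  have comb: "(\<lambda>\<omega>. \<Sum>w\<in>VN N. ?a w * X w \<omega>) = X z"
    using z by (auto simp: if_distrib[of "\<lambda>t. t * _"] sum.delta' cong: if_cong)
  have "(\<Sum>y\<in>VN N. ?a x * ?a y * green N x y) = (if x = z then green N z z else 0)" for x
    using z by (simp add: if_distrib[of "\<lambda>t. t * _"] sum.delta' cong: if_cong)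
  then have var: "(\<Sum>x\<in>VN N. \<Sum>y\<in>VN N. ?a x * ?a y * green N x y) = green N z z"
    using z by simp
  show ?thesis using normal unfolding comb var .
qed

lemma expected_max_GFF_le:
  assumes G: "is_GFF M N X" and var_le: "\<And>z. green N z z \<le> S" and S: "S \<ge> 0"
  shows "integral\<^sup>L M (field_max N X) \<le> S/2 + ln (card (VN N)) + 1"
proof -
  have P: "prob_space M" and meas: "\<And>z. z \<in> VN N \<Longrightarrow> X z \<in> borel_measurable M"
    using G unfolding is_GFF_def by auto
  note moment = centered_normal_exp_moment[OF P GFF_marginal[OF G] meas]
  have "(\<integral>\<omega>. exp (X z \<omega>) \<partial>M) \<le> exp (S/2)" if "z \<in> VN N" for z
    using moment(2)[OF that that] var_le[of z] by simp
  moreover have "VN N \<noteq> {}" unfolding VN_def by auto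
  ultimately show ?thesis
    unfolding field_max_def
    using expected_max_le_exp_moment[OF P finite_VN _ moment(1)] S by auto
qed

section \<open>Bounding the Green function by a superharmonic potential\<close>

lemma killed_p_nonneg: "killed_p N m x y \<ge> 0"
  by (induction m arbitrary: y) (auto intro!: sum_nonneg)

text \<open>The weighted mass sum_y P^x(w_m = y, m < tau) h(y) drops by at least P^x(w_m = x, m < tau)
  at each step, so every partial sum of the Green series is bounded by the initial mass h(x).\<close>
lemma green_diag_le_potential:
  assumes x: "x \<in> VNint N"
    and h_nonneg: "\<And>y. y \<in> VNint N \<Longrightarrow> 0 \<le> h y"
    and h_super: "\<And>z. z \<in> VNint N \<Longrightarrow>
        (\<Sum>y\<in>VNint N. (if adj z y then 1/4 else 0) * h y) + (if z = x then 1 else 0) \<le> h z"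
  shows "green N x x \<le> h x"
proof -
  define mass where "mass m = (\<Sum>y\<in>VNint N. killed_p N m x y * h y)" for m
  have mass_nonneg: "mass m \<ge> 0" for m
    unfolding mass_def using h_nonneg killed_p_nonneg by (intro sum_nonneg) auto
  have mass_0: "mass 0 = h x"
    unfolding mass_def using x by (simp add: if_distrib[of "\<lambda>t. t * _"] cong: if_cong)
  have mass_step: "killed_p N m x x + mass (Suc m) \<le> mass m" for m
  proof -
    let ?step = "\<lambda>z y. (if adj z y then 1/4 else 0) :: real"
    have "mass (Suc m) = (\<Sum>y\<in>VNint N. \<Sum>z\<in>VNint N. killed_p N m x z * (?step z y * h y))"
      unfolding mass_def by (simp add: sum_distrib_right mult.assoc)
    also have "\<dots> = (\<Sum>z\<in>VNint N. killed_p N m x z * (\<Sum>y\<in>VNint N. ?step z y * h y))"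
      by (subst sum.swap) (simp add: sum_distrib_left)
    also have "\<dots> \<le> (\<Sum>z\<in>VNint N. killed_p N m x z * (h z - (if z = x then 1 else 0)))"
      using h_super killed_p_nonneg
      by (intro sum_mono mult_left_mono) (auto simp: algebra_simps)
    also have "\<dots> = mass m - killed_p N m x x"
      unfolding mass_def using x
      by (simp add: right_diff_distrib sum_subtractf if_distrib[of "\<lambda>t. _ * t"] cong: if_cong)
    finally show ?thesis by simp
  qed
  have "(\<Sum>m<T. killed_p N m x x) + mass T \<le> mass 0" for T
  proof (induction T)
    case (Suc T)
    then show ?case using mass_step[of T] by simp
  qed simp
  then have partial: "(\<Sum>m<T. killed_p N m x x) \<le> h x" for T
    using mass_nonneg[of T] mass_0 by (smt (verit))
  have "summable (\<lambda>m. killed_p N m x x)"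
    by (rule summableI_nonneg_bounded[OF killed_p_nonneg partial])
  then show ?thesis
    unfolding green_def using x partial by (auto intro: suminf_le_const)
qed

text \<open>The logarithmic potential centred at x, normalised so that it has unit Laplacian
  defect at x and is nonnegative on the box.\<close>
definition log_potential :: "nat \<Rightarrow> int \<times> int \<Rightarrow> int \<times> int \<Rightarrow> real" where
  "log_potential N x y =
     (ln (2 * real N ^ 2 + 1) - ln (real_of_int ((fst y - fst x)\<^sup>2 + (snd y - snd x)\<^sup>2) + 1)) / ln 2"

lemma log_potential_nonneg:
  assumes "x \<in> VN N" "y \<in> VN N"
  shows "log_potential N x y \<ge> 0"
proof -
  obtain x1 x2 y1 y2 where xy: "x = (x1, x2)" "y = (y1, y2)" by (cases x; cases y)
  have "\<bar>y1 - x1\<bar> \<le> int N" "\<bar>y2 - x2\<bar> \<le> int N"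
    using assms xy by (auto simp: VN_def)
  then have "(y1 - x1)\<^sup>2 \<le> (int N)\<^sup>2" "(y2 - x2)\<^sup>2 \<le> (int N)\<^sup>2"
    by (metis abs_le_square_iff abs_of_nat of_nat_0_le_iff abs_ge_self dual_order.trans)+
  then have "real_of_int ((y1 - x1)\<^sup>2 + (y2 - x2)\<^sup>2) \<le> 2 * real N ^ 2"
    by (smt (verit) of_int_add of_int_le_iff of_int_of_nat_eq of_int_power)
  then have "ln (real_of_int ((y1 - x1)\<^sup>2 + (y2 - x2)\<^sup>2) + 1) \<le> ln (2 * real N ^ 2 + 1)"
    by (subst ln_le_cancel_iff) (auto simp: add_nonneg_pos)
  then show ?thesis unfolding log_potential_def xy by simp
qed

text \<open>The function q(a,b) = a^2 + b^2 + 1 is log-superharmonic on Z^2: its fourth power is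
  dominated by the product of its four neighbouring values.\<close>
lemma four_neighbour_product:
  fixes a b :: real
  shows "(a\<^sup>2 + b\<^sup>2 + 1) ^ 4
         \<le> ((a+1)\<^sup>2 + b\<^sup>2 + 1) * ((a-1)\<^sup>2 + b\<^sup>2 + 1) * (a\<^sup>2 + (b+1)\<^sup>2 + 1) * (a\<^sup>2 + (b-1)\<^sup>2 + 1)"
proof -
  define u where "u = a\<^sup>2 + b\<^sup>2 + 2"
  have difference: "((a+1)\<^sup>2 + b\<^sup>2 + 1) * ((a-1)\<^sup>2 + b\<^sup>2 + 1) * (a\<^sup>2 + (b+1)\<^sup>2 + 1)
        * (a\<^sup>2 + (b-1)\<^sup>2 + 1) - (a\<^sup>2 + b\<^sup>2 + 1) ^ 4 = 2 * u\<^sup>2 + 4 * u - 1 + 16 * a\<^sup>2 * b\<^sup>2"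
    unfolding u_def by algebra
  have "u \<ge> 2" unfolding u_def by simp
  moreover have "0 \<le> 16 * a\<^sup>2 * b\<^sup>2" and "0 \<le> 2 * u\<^sup>2" by simp_all
  ultimately have "0 \<le> 2 * u\<^sup>2 + 4 * u - 1 + 16 * a\<^sup>2 * b\<^sup>2" by linarith
  then show ?thesis unfolding difference[symmetric] by (simp only: diff_ge_0_iff_ge)
qed

text \<open>Superharmonicity of the logarithmic potential in relative coordinates (a,b) = y - x:
  away from 0 by the previous lemma, and at 0 with defect exactly 1 (thanks to the
  normalisation by ln 2).\<close>
lemma log_mean_value_step:
  fixes a b L :: real
  shows "((L - ln ((a+1)\<^sup>2 + b\<^sup>2 + 1)) + (L - ln ((a-1)\<^sup>2 + b\<^sup>2 + 1))
          + (L - ln (a\<^sup>2 + (b+1)\<^sup>2 + 1)) + (L - ln (a\<^sup>2 + (b-1)\<^sup>2 + 1))) / ln 2 / 4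
         + (if a = 0 \<and> b = 0 then 1 else 0)
         \<le> (L - ln (a\<^sup>2 + b\<^sup>2 + 1)) / ln 2"
proof (cases "a = 0 \<and> b = 0")
  case True
  then show ?thesis by (simp add: field_simps)
next
  case False
  define p1 p2 p3 p4 q where "p1 = (a+1)\<^sup>2 + b\<^sup>2 + 1" and "p2 = (a-1)\<^sup>2 + b\<^sup>2 + 1"
    and "p3 = a\<^sup>2 + (b+1)\<^sup>2 + 1" and "p4 = a\<^sup>2 + (b-1)\<^sup>2 + 1" and "q = a\<^sup>2 + b\<^sup>2 + 1"
  have pos: "p1 > 0" "p2 > 0" "p3 > 0" "p4 > 0" "q > 0"
    unfolding p1_def p2_def p3_def p4_def q_def by (simp_all add: add_nonneg_pos)
  have "ln (q ^ 4) \<le> ln (p1 * p2 * p3 * p4)"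
    using four_neighbour_product[of a b] pos
    unfolding p1_def p2_def p3_def p4_def q_def by (simp add: zero_less_mult_iff)
  then have "4 * ln q \<le> ln p1 + ln p2 + ln p3 + ln p4"
    using pos by (simp add: ln_mult ln_realpow zero_less_mult_iff)
  then have "((L - ln p1) + (L - ln p2) + (L - ln p3) + (L - ln p4)) / 4 \<le> L - ln q"
    by (simp add: field_simps)
  then have "((L - ln p1) + (L - ln p2) + (L - ln p3) + (L - ln p4)) / 4 / ln 2 \<le> (L - ln q) / ln 2"
    by (intro divide_right_mono) auto
  then show ?thesis
    unfolding if_not_P[OF False] p1_def[symmetric] p2_def[symmetric] p3_def[symmetric]
      p4_def[symmetric] q_def[symmetric] by simp
qed

lemma adj_iff:
  "adj z y \<longleftrightarrow> y \<in> {(fst z + 1, snd z), (fst z - 1, snd z), (fst z, snd z + 1), (fst z, snd z - 1)}"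
  by (cases z; cases y) (auto simp: adj_def abs_if split: if_splits)

text \<open>The logarithmic potential is superharmonic for the killed walk with unit source at x.
  Neighbours on the boundary only lower the left-hand side, since the potential is
  nonnegative there.\<close>
lemma log_potential_superharmonic:
  assumes z: "z \<in> VNint N" and x: "x \<in> VNint N"
  shows "(\<Sum>y\<in>VNint N. (if adj z y then 1/4 else 0) * log_potential N x y) + (if z = x then 1 else 0)
         \<le> log_potential N x z"
proof -
  obtain z1 z2 x1 x2 where zx: "z = (z1, z2)" "x = (x1, x2)" by (cases z; cases x)
  define nbrs where "nbrs = {(z1 + 1, z2), (z1 - 1, z2), (z1, z2 + 1), (z1, z2 - 1)}"
  have nbrs_VN: "nbrs \<subseteq> VN N" using z unfolding nbrs_def zx VNint_def VN_def by auto
  have x_VN: "x \<in> VN N" using x by (auto simp: VNint_def VN_def)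
  have "(\<Sum>y\<in>VNint N. (if adj z y then 1/4 else 0) * log_potential N x y)
        = (\<Sum>y\<in>VNint N \<inter> nbrs. log_potential N x y / 4)"
    unfolding sum.inter_restrict[OF finite_VNint]
    by (intro sum.cong) (auto simp: adj_iff zx nbrs_def)
  also have "\<dots> \<le> (\<Sum>y\<in>nbrs. log_potential N x y / 4)"
    using nbrs_VN x_VN log_potential_nonneg[of x N]
    by (intro sum_mono2) (auto simp: nbrs_def)
  also have "\<dots> = (log_potential N x (z1 + 1, z2) + log_potential N x (z1 - 1, z2)
                  + log_potential N x (z1, z2 + 1) + log_potential N x (z1, z2 - 1)) / 4"
    unfolding nbrs_def by (simp add: field_simps)
  finally have nbr_sum: "(\<Sum>y\<in>VNint N. (if adj z y then 1/4 else 0) * log_potential N x y) \<le> \<dots>" .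
  define a b where "a = real_of_int (z1 - x1)" and "b = real_of_int (z2 - x2)"
  have "z = x \<longleftrightarrow> a = 0 \<and> b = 0" unfolding a_def b_def zx by auto
  then have "(log_potential N x (z1 + 1, z2) + log_potential N x (z1 - 1, z2)
              + log_potential N x (z1, z2 + 1) + log_potential N x (z1, z2 - 1)) / 4
             + (if z = x then 1 else 0) \<le> log_potential N x z"
    using log_mean_value_step[of "ln (2 * real N ^ 2 + 1)" a b]
    unfolding log_potential_def zx a_def b_def
    by (simp add: algebra_simps add_divide_distrib diff_divide_distrib)
  then show ?thesis using nbr_sum by linarith
qed

lemma green_diag_le_log:
  "green N x x \<le> ln (2 * real N ^ 2 + 1) / ln 2"
proof (cases "x \<in> VNint N")
  case True
  have VN: "VNint N \<subseteq> VN N" by (auto simp: VNint_def VN_def)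
  have "green N x x \<le> log_potential N x x"
  proof (rule green_diag_le_potential[OF True, of "log_potential N x"])
    show "0 \<le> log_potential N x y" if "y \<in> VNint N" for y
      using that True VN log_potential_nonneg[of x N y] by blast
  qed (rule log_potential_superharmonic[OF _ True])
  then show ?thesis by (simp add: log_potential_def)
qed (simp add: green_def)

section \<open>Linear growth of E X*_(2^n) and the main result\<close>

lemma dyadic_log_bounds:
  "ln (2 * real (2 ^ n) ^ 2 + 1) / ln 2 \<le> 2 * real n + 2"
  "ln (real (card (VN (2 ^ n)))) \<le> 2 * real n + 2"
proof -
  have ln2: "0 < ln (2::real)" "ln (2::real) \<le> 1" using ln_le_minus_one[of 2] by auto
  have pow: "real (2 ^ n) ^ 2 = (2::real) ^ (2 * n)"
    by (simp add: power_mult[symmetric] mult.commute)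
  have "(1::real) \<le> 2 ^ (2 * n)" and "(2::real) ^ (2 * n + 2) = 4 * 2 ^ (2 * n)" by simp_all
  then have "2 * real (2 ^ n) ^ 2 + 1 \<le> (2::real) ^ (2 * n + 2)"
    unfolding pow by linarith
  then have "ln (2 * real (2 ^ n) ^ 2 + 1) \<le> (2 * n + 2) * ln 2"
    by (subst ln_realpow[symmetric]) (auto simp: add_pos_nonneg)
  then show "ln (2 * real (2 ^ n) ^ 2 + 1) / ln 2 \<le> 2 * real n + 2"
    using ln2 by (simp add: divide_le_eq add.commute)
  have "real (card (VN (2 ^ n))) \<le> (2 ^ (n + 1)) ^ 2"
    unfolding card_VN of_nat_power by (intro power_mono) auto
  also have "\<dots> = (2::real) ^ (2 * n + 2)" by (simp add: power_mult[symmetric] mult.commute)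
  finally have card_le: "real (card (VN (2 ^ n))) \<le> (2::real) ^ (2 * n + 2)" .
  have card_pos: "0 < real (card (VN (2 ^ n)))"
    unfolding card_VN by (simp del: of_nat_power)
  have "ln (real (card (VN (2 ^ n)))) \<le> ln ((2::real) ^ (2 * n + 2))"
    using card_le card_pos by (subst ln_le_cancel_iff) auto
  also have "\<dots> = real (2 * n + 2) * ln 2"
    by (rule ln_realpow)
  also have "\<dots> \<le> real (2 * n + 2)"
    using ln2 by (intro mult_left_le) auto
  finally show "ln (real (card (VN (2 ^ n)))) \<le> 2 * real n + 2"
    by simp
qed

lemma expected_max_GFF_dyadic_le:
  assumes G: "is_GFF M (2 ^ n) X"
  shows "integral\<^sup>L M (field_max (2 ^ n) X) \<le> 3 * real n + 4"
proof -
  have "integral\<^sup>L M (field_max (2 ^ n) X)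
        \<le> ln (2 * real (2 ^ n) ^ 2 + 1) / ln 2 / 2 + ln (card (VN (2 ^ n))) + 1"
    using expected_max_GFF_le[OF G green_diag_le_log] by simp
  then show ?thesis using dyadic_log_bounds[of n] by simp
qed

lemma small_increments_infinitely_often:
  fixes E :: "nat \<Rightarrow> real"
  assumes linear: "\<And>n. E n \<le> a * real n + b" and "a < c"
  shows "\<exists>nk :: nat \<Rightarrow> nat. strict_mono nk \<and> (\<forall>k. E (nk k + 1) \<le> E (nk k) + c)"
proof -
  define A where "A = {n. E (n + 1) \<le> E n + c}"
  have "infinite A"
  proof
    assume "finite A"
    then obtain n0 where n0: "\<And>n. n \<in> A \<Longrightarrow> n < n0"
      by (meson finite_nat_set_iff_bounded)
    have grow: "E (n0 + j) \<ge> E n0 + c * real j" for j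
    proof (induction j)
      case (Suc j)
      have "n0 + j \<notin> A" using n0 by fastforce
      then show ?case using Suc by (simp add: A_def algebra_simps)
    qed simp
    obtain j where "a * real n0 + b - E n0 < real j * (c - a)"
      using ex_less_of_nat_mult \<open>a < c\<close> by (metis diff_gt_0_iff_gt)
    then show False
      using grow[of j] linear[of "n0 + j"] by (simp add: algebra_simps)
  qed
  then obtain nk :: "nat \<Rightarrow> nat" where "strict_mono nk" "\<And>k. nk k \<in> A"
    using infinite_enumerate by blast
  then have "strict_mono nk \<and> (\<forall>k. E (nk k + 1) \<le> E (nk k) + c)"
    unfolding A_def by auto
  then show ?thesis by blast
qed

theorem lemma2p2:
  fixes M :: "nat \<Rightarrow> 'a measure"
    and X :: "nat \<Rightarrow> int \<times> int \<Rightarrow> 'a \<Rightarrow> real"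
  assumes "\<And>n. is_GFF (M n) (2 ^ n) (X n)"
  shows "\<exists>(nk :: nat \<Rightarrow> nat) (C :: real). filterlim nk at_top at_top \<and>
           (\<forall>k. integral\<^sup>L (M (nk k + 1)) (field_max (2 ^ (nk k + 1)) (X (nk k + 1)))
                \<le> integral\<^sup>L (M (nk k)) (field_max (2 ^ nk k) (X (nk k))) + C)"
proof -
  define E where "E n = integral\<^sup>L (M n) (field_max (2 ^ n) (X n))" for n
  have "E n \<le> 3 * real n + 4" for n
    unfolding E_def by (rule expected_max_GFF_dyadic_le[OF assms])
  then obtain nk :: "nat \<Rightarrow> nat" where "strict_mono nk" and "\<forall>k. E (nk k + 1) \<le> E (nk k) + 4"
    using small_increments_infinitely_often[of E 3 4 4] by auto
  then show ?thesis
    unfolding E_def using filterlim_subseq by blast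
qed

end
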